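(* Let $\Delta^+=\{\zeta\in\mathbb{C}: |\zeta|<1,\ \operatorname{Im}\zeta>0\}$ be the upper half disc and let $\gamma=(-1,1)$, viewed as an interval of the real axis in $\mathbb{C}$. Let $F$ be holomorphic on $\Delta^+$ with a continuous extension to $\Delta^+\cup\gamma$, such that $F$ maps $\gamma$ into $\{z\in\mathbb{C}: |\operatorname{Im} z|\leq C|\operatorname{Re} z|\}$ for some constant $C>0$. Suppose $F$ vanishes to infinite order at $0$, i.e. for every $k\in\mathbb{N}$, $F(\zeta)=O(|\zeta|^k)$ as $\zeta\to 0$ with $\zeta\in\Delta^+$. Then either $F\equiv 0$, or there is a sequence $(p_j)$ in $\Delta^+$ with $p_j\to 0$ and $\operatorname{Re}F(p_j)\neq 0$ for all $j$, such that $\operatorname{Im}F(p_j)/\operatorname{Re}F(p_j)$ is unbounded. *)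

theory Defs
  imports "HOL-Analysis.Analysis"
begin

definition upper_half_disc :: "complex set" where
  "upper_half_disc = {z. norm z < 1 \<and> Im z > 0}"

definition gamma_interval :: "complex set" where
  "gamma_interval = {z. Im z = 0 \<and> -1 < Re z \<and> Re z < 1}"

end

theory Submission
  imports Defs "HOL-Complex_Analysis.Complex_Analysis"
begin

text \<open>If the second alternative fails, the ratio \<open>Im F / Re F\<close> is bounded near \<open>0\<close>
  in the upper half disc. Then \<open>Re F\<close> has no zero on a small half disc \<open>U\<close>: \<open>F\<close> is not
  constant (it is flat at \<open>0\<close> but not identically zero), so by the open mapping theorem the
  image of any neighbourhood of a zero of \<open>Re F\<close> contains values with arbitrarily large ratio.
  Hence \<open>F\<close> or \<open>-F\<close> has positive real part on \<open>U\<close>, and Harnack's inequality iterated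
  along the points \<open>\<i> s / 2\<^sup>n\<close> gives \<open>|F(\<i> s / 2\<^sup>n)| \<ge> c / 3\<^sup>n\<close>, contradicting
  \<open>F(\<zeta>) = O(|\<zeta>|\<^sup>2)\<close>.\<close>

lemma norm_diff_lt_norm_add_cnj:
  fixes x a :: complex
  assumes "Re x > 0" "Re a > 0"
  shows "norm (x - a) < norm (x + cnj a)"
proof -
  have "(Re x - Re a)^2 < (Re x + Re a)^2"
    using assms by (simp add: power2_eq_square algebra_simps)
  then show ?thesis by (simp add: cmod_def)
qed

lemma norm_le_3_norm_of_norm_cayley_le_half:
  fixes x a :: complex
  assumes "x + cnj a \<noteq> 0" and "norm ((x - a) / (x + cnj a)) \<le> 1/2"
  shows "norm a \<le> 3 * norm x"
proof -
  define p where "p = (x - a) / (x + cnj a)"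
  have p: "norm p \<le> 1/2" using assms(2) by (simp add: p_def)
  have "x * (1 - p) = a + p * cnj a"
    using assms(1) by (simp add: p_def field_simps)
  have "norm a / 2 \<le> norm a - norm p * norm a"
    using mult_right_mono[OF p norm_ge_zero[of a]] by simp
  also have "\<dots> \<le> norm (a + p * cnj a)"
    by (metis norm_diff_ineq norm_mult complex_mod_cnj)
  also have "\<dots> = norm x * norm (1 - p)"
    by (metis \<open>x * (1 - p) = a + p * cnj a\<close> norm_mult)
  also have "\<dots> \<le> norm x * (3/2)"
    using p norm_triangle_ineq4[of 1 p] by (intro mult_left_mono) auto
  finally show ?thesis by simp
qed

text \<open>Schwarz's lemma applied to the Cayley transform \<open>(G - G c) / (G + cnj (G c))\<close>,
  which maps the right half plane into the unit disc and sends \<open>G c\<close> to \<open>0\<close>.\<close>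

lemma harnack_half_radius:
  fixes G :: "complex \<Rightarrow> complex"
  assumes holo: "G holomorphic_on ball c R" and "R > 0"
    and pos: "\<And>z. z \<in> ball c R \<Longrightarrow> Re (G z) > 0"
    and w: "norm (w - c) \<le> R / 2"
  shows "norm (G c) \<le> 3 * norm (G w)"
proof -
  define a where "a = G c"
  have "Re a > 0" using pos \<open>R > 0\<close> by (simp add: a_def)
  define h where "h = (\<lambda>z. c + of_real R * z)"
  have h_ball: "h z \<in> ball c R" if "norm z < 1" for z
    using that \<open>R > 0\<close> by (simp add: h_def dist_norm norm_mult)
  define \<phi> where "\<phi> = (\<lambda>z. (G (h z) - a) / (G (h z) + cnj a))"
  have den: "G (h z) + cnj a \<noteq> 0" if "norm z < 1" for z
    using pos[OF h_ball[OF that]] \<open>Re a > 0\<close>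
    by (metis add_pos_pos cnj.sel(1) less_irrefl plus_complex.sel(1) zero_complex.sel(1))
  have "h holomorphic_on ball 0 1" unfolding h_def by (intro holomorphic_intros)
  then have "(G \<circ> h) holomorphic_on ball 0 1"
    by (rule holomorphic_on_compose[OF _ holomorphic_on_subset[OF holo]]) (auto intro: h_ball)
  then have "(\<lambda>z. G (h z)) holomorphic_on ball 0 1" by (simp add: o_def)
  then have "\<phi> holomorphic_on ball 0 1"
    unfolding \<phi>_def using den by (intro holomorphic_intros) auto
  moreover have "\<phi> 0 = 0" by (simp add: \<phi>_def h_def a_def)
  moreover have "norm (\<phi> z) < 1" if "norm z < 1" for z
    using norm_diff_lt_norm_add_cnj[OF pos[OF h_ball[OF that]] \<open>Re a > 0\<close>] den[OF that]
    by (simp add: \<phi>_def norm_divide divide_less_eq)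
  moreover define \<xi> where "\<xi> = (w - c) / of_real R"
  moreover have "norm \<xi> \<le> 1/2" using w \<open>R > 0\<close> by (simp add: \<xi>_def norm_divide divide_le_eq)
  ultimately have "norm (\<phi> \<xi>) \<le> 1/2"
    using Schwarz_Lemma(1)[of \<phi> \<xi>] by force
  moreover have "h \<xi> = w" using \<open>R > 0\<close> by (simp add: h_def \<xi>_def)
  ultimately show ?thesis
    using norm_le_3_norm_of_norm_cayley_le_half[of "G w" a] den[of \<xi>] \<open>norm \<xi> \<le> 1/2\<close>
    by (simp add: \<phi>_def a_def)
qed

lemma ball_ii_subset_upper_half_ball:
  assumes "s > 0" "2 * s \<le> \<rho>"
  shows "ball (\<i> * of_real s) s \<subseteq> ball 0 \<rho> \<inter> {z. Im z > 0}"
proof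
  fix z assume z: "z \<in> ball (\<i> * of_real s) s"
  then have d: "norm (\<i> * of_real s - z) < s" by (simp add: dist_norm)
  then have "\<bar>Im (\<i> * of_real s - z)\<bar> < s" using abs_Im_le_cmod le_less_trans by blast
  then have "Im z > 0" by simp
  moreover have "norm z < \<rho>"
    using norm_triangle_sub[of z "\<i> * of_real s"] d assms
    by (simp add: norm_mult norm_minus_commute)
  ultimately show "z \<in> ball 0 \<rho> \<inter> {z. Im z > 0}" by simp
qed

lemma harnack_chain_imaginary_axis:
  fixes G :: "complex \<Rightarrow> complex"
  assumes holo: "G holomorphic_on ball 0 \<rho> \<inter> {z. Im z > 0}"
    and pos: "\<And>z. z \<in> ball 0 \<rho> \<inter> {z. Im z > 0} \<Longrightarrow> Re (G z) > 0"
    and "s > 0" "2 * s \<le> \<rho>"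
  shows "norm (G (\<i> * of_real s)) \<le> 3 ^ n * norm (G (\<i> * of_real (s / 2 ^ n)))"
proof (induction n)
  case (Suc n)
  define r where "r = s / 2 ^ n"
  have "r > 0" "2 * r \<le> \<rho>"
    using \<open>s > 0\<close> \<open>2 * s \<le> \<rho>\<close> by (auto simp: r_def divide_le_eq intro: order_trans)
  with ball_ii_subset_upper_half_ball have sub: "ball (\<i> * of_real r) r \<subseteq> ball 0 \<rho> \<inter> {z. Im z > 0}" .
  have "norm (\<i> * of_real (r / 2) - \<i> * of_real r) = r / 2"
    using \<open>r > 0\<close> by (simp add: norm_mult flip: right_diff_distrib of_real_diff)
  then have step: "norm (G (\<i> * of_real r)) \<le> 3 * norm (G (\<i> * of_real (r / 2)))"
    using \<open>r > 0\<close> pos subsetD[OF sub]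
    by (intro harnack_half_radius[OF holomorphic_on_subset[OF holo sub]]) auto
  have "norm (G (\<i> * of_real s)) \<le> 3 ^ n * norm (G (\<i> * of_real r))"
    using Suc.IH by (simp only: r_def)
  also have "\<dots> \<le> 3 ^ n * (3 * norm (G (\<i> * of_real (r / 2))))"
    using step by (rule mult_left_mono) simp
  also have "r / 2 = s / 2 ^ Suc n" by (simp add: r_def)
  finally show ?case by (simp only: power_Suc mult_ac)
qed simp

lemma imaginary_halving_in_upper_half_ball:
  assumes "0 < s" "s < \<rho>"
  shows "\<i> * of_real (s / 2 ^ n) \<in> ball 0 \<rho> \<inter> {z. Im z > 0}"
proof -
  have "s / 2 ^ n \<le> s" using \<open>s > 0\<close> by (simp add: divide_le_eq)
  then show ?thesis using assms by (simp add: norm_mult norm_divide norm_power)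
qed

lemma imaginary_halving_tendsto_0: "(\<lambda>n. \<i> * of_real (s / 2 ^ n)) \<longlonglongrightarrow> 0"
  by (rule tendsto_norm_zero_cancel)
    (simp add: norm_mult norm_divide norm_power LIMSEQ_divide_realpow_zero)

lemma zero_islimpt_upper_half_ball:
  assumes "\<rho> > 0"
  shows "0 islimpt ball 0 \<rho> \<inter> {z. Im z > 0}"
proof -
  have "\<i> * of_real (\<rho> / 2 / 2 ^ n) \<in> ball 0 \<rho> \<inter> {z. Im z > 0} - {0}" for n
    using imaginary_halving_in_upper_half_ball[of "\<rho> / 2" \<rho> n] assms by simp
  then show ?thesis
    unfolding islimpt_sequential
    by (intro exI[of _ "\<lambda>n. \<i> * of_real (\<rho> / 2 / 2 ^ n)"] conjI allI imaginary_halving_tendsto_0)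
qed

lemma positive_real_part_not_flat:
  fixes G :: "complex \<Rightarrow> complex"
  assumes holo: "G holomorphic_on ball 0 \<rho> \<inter> {z. Im z > 0}"
    and pos: "\<And>z. z \<in> ball 0 \<rho> \<inter> {z. Im z > 0} \<Longrightarrow> Re (G z) > 0"
    and "\<rho> > 0"
  shows "\<not> eventually (\<lambda>z. norm (G z) \<le> M * norm z ^ 2) (at 0 within ball 0 \<rho> \<inter> {z. Im z > 0})"
proof
  define s where "s = \<rho> / 2"
  define z where "z = (\<lambda>n::nat. \<i> * of_real (s / 2 ^ n))"
  have "s > 0" "s < \<rho>" "2 * s \<le> \<rho>" using \<open>\<rho> > 0\<close> by (simp_all add: s_def)
  have z_in: "z n \<in> ball 0 \<rho> \<inter> {z. Im z > 0}" for n
    unfolding z_def by (rule imaginary_halving_in_upper_half_ball[OF \<open>s > 0\<close> \<open>s < \<rho>\<close>])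
  have "filterlim z (at 0 within ball 0 \<rho> \<inter> {z. Im z > 0}) sequentially"
    using z_in imaginary_halving_tendsto_0 \<open>s > 0\<close> by (auto simp: filterlim_at z_def)
  moreover assume "eventually (\<lambda>z. norm (G z) \<le> M * norm z ^ 2) (at 0 within ball 0 \<rho> \<inter> {z. Im z > 0})"
  ultimately have "eventually (\<lambda>n. norm (G (z n)) \<le> M * norm (z n) ^ 2) sequentially"
    by (rule eventually_compose_filterlim[rotated])
  then have "eventually (\<lambda>n. norm (G (\<i> * of_real s)) \<le> M * s\<^sup>2 * (3/4) ^ n) sequentially"
  proof (rule eventually_mono)
    fix n assume flat: "norm (G (z n)) \<le> M * norm (z n) ^ 2"
    have "norm (G (\<i> * of_real s)) \<le> 3 ^ n * norm (G (z n))"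
      unfolding z_def by (rule harnack_chain_imaginary_axis[OF holo pos \<open>s > 0\<close> \<open>2 * s \<le> \<rho>\<close>])
    also have "\<dots> \<le> 3 ^ n * (M * (s / 2 ^ n) ^ 2)"
      using flat \<open>s > 0\<close> by (intro mult_left_mono) (simp_all add: z_def norm_mult norm_divide norm_power)
    also have "\<dots> = M * s\<^sup>2 * (3/4) ^ n"
    proof -
      have "((2::real) ^ n)\<^sup>2 = 4 ^ n" by (simp add: power2_eq_square flip: power_mult_distrib)
      then show ?thesis by (simp add: field_simps flip: power_mult_distrib)
    qed
    finally show "norm (G (\<i> * of_real s)) \<le> M * s\<^sup>2 * (3/4) ^ n" .
  qed
  moreover have "(\<lambda>n. M * s\<^sup>2 * (3/4::real) ^ n) \<longlonglongrightarrow> 0"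
    by (intro tendsto_mult_right_zero LIMSEQ_power_zero) simp
  ultimately have "norm (G (\<i> * of_real s)) \<le> 0"
    by (intro tendsto_le[OF trivial_limit_sequentially]) auto
  then show False using pos[OF z_in[of 0]] by (simp add: z_def)
qed

lemma connected_nonvanishing_real_sign:
  fixes f :: "'a::topological_space \<Rightarrow> real"
  assumes "connected S" "continuous_on S f" "\<And>x. x \<in> S \<Longrightarrow> f x \<noteq> 0"
  shows "(\<forall>x\<in>S. f x > 0) \<or> (\<forall>x\<in>S. f x < 0)"
proof (rule ccontr)
  assume "\<not> ?thesis"
  then obtain x y where "x \<in> S" "y \<in> S" "f x \<le> 0" "0 \<le> f y"
    by (meson not_le)
  moreover have "connected (f ` S)"
    using assms(1,2) by (rule connected_continuous_image[rotated])
  ultimately have "0 \<in> f ` S"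
    unfolding connected_iff_interval by blast
  with assms(3) show False by force
qed

lemma nonvanishing_real_part_not_flat:
  fixes F :: "complex \<Rightarrow> complex"
  assumes holo: "F holomorphic_on ball 0 \<rho> \<inter> {z. Im z > 0}"
    and nonzero: "\<And>z. z \<in> ball 0 \<rho> \<inter> {z. Im z > 0} \<Longrightarrow> Re (F z) \<noteq> 0"
    and "\<rho> > 0"
  shows "\<not> eventually (\<lambda>z. norm (F z) \<le> M * norm z ^ 2) (at 0 within ball 0 \<rho> \<inter> {z. Im z > 0})"
proof -
  have "connected (ball 0 \<rho> \<inter> {z. Im z > 0})"
    by (intro convex_connected convex_Int convex_ball convex_halfspace_Im_gt)
  moreover have "continuous_on (ball 0 \<rho> \<inter> {z. Im z > 0}) (\<lambda>z. Re (F z))"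
    by (intro continuous_intros holomorphic_on_imp_continuous_on holo)
  ultimately consider "\<And>z. z \<in> ball 0 \<rho> \<inter> {z. Im z > 0} \<Longrightarrow> Re (F z) > 0"
    | "\<And>z. z \<in> ball 0 \<rho> \<inter> {z. Im z > 0} \<Longrightarrow> Re (- F z) > 0"
    using connected_nonvanishing_real_sign[of _ "\<lambda>z. Re (F z)"] nonzero by fastforce
  then show ?thesis
  proof cases
    case 1
    then show ?thesis using positive_real_part_not_flat[OF holo _ \<open>\<rho> > 0\<close>] by blast
  next
    case 2
    have "(\<lambda>z. - F z) holomorphic_on ball 0 \<rho> \<inter> {z. Im z > 0}"
      using holo by (rule holomorphic_on_minus)
    from positive_real_part_not_flat[OF this 2 \<open>\<rho> > 0\<close>] show ?thesis by simp
  qed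
qed

lemma Re_zero_imp_Im_Re_ratio_unbounded:
  fixes F :: "complex \<Rightarrow> complex"
  assumes "F holomorphic_on S" "open S" "connected S" "\<not> F constant_on S"
    and "r > 0" "ball z r \<subseteq> S" "Re (F z) = 0"
  shows "\<exists>z'\<in>ball z r. Re (F z') \<noteq> 0 \<and> B < \<bar>Im (F z') / Re (F z')\<bar>"
proof -
  have "open (F ` ball z r)"
    using open_mapping_thm assms(1-4,6) by blast
  moreover have "F z \<in> F ` ball z r" using \<open>r > 0\<close> by simp
  ultimately obtain \<epsilon> where "\<epsilon> > 0" and \<epsilon>: "ball (F z) \<epsilon> \<subseteq> F ` ball z r"
    using openE by blast
  \<comment> \<open>a point of that disc with real part \<open>t > 0\<close> and imaginary part of size \<open>\<ge> K t\<close>\<close>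
  define K where "K = \<bar>B\<bar> + 1"
  define t where "t = \<epsilon> / (2 * (K + 1))"
  define \<sigma> :: real where "\<sigma> = (if Im (F z) \<ge> 0 then 1 else -1)"
  define w where "w = F z + Complex t (\<sigma> * t * K)"
  have "K > 0" "t > 0" using \<open>\<epsilon> > 0\<close> by (simp_all add: K_def t_def add_pos_pos)
  have "\<bar>\<sigma>\<bar> = 1" by (simp add: \<sigma>_def)
  have "norm (Complex t (\<sigma> * t * K)) \<le> t + t * K"
    using cmod_le[of "Complex t (\<sigma> * t * K)"] \<open>t > 0\<close> \<open>K > 0\<close>
    by (simp add: abs_mult \<open>\<bar>\<sigma>\<bar> = 1\<close>)
  also have "\<dots> = \<epsilon> / 2"
    using \<open>K > 0\<close> by (simp add: t_def divide_simps) (simp add: algebra_simps)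
  also have "\<dots> < \<epsilon>" using \<open>\<epsilon> > 0\<close> by simp
  finally have "w \<in> F ` ball z r"
    using \<epsilon> by (auto simp: w_def dist_norm)
  then obtain z' where z': "z' \<in> ball z r" "F z' = w" by blast
  have "Re w = t" using \<open>Re (F z) = 0\<close> by (simp add: w_def)
  have "K * t \<le> \<bar>Im w\<bar>"
    using mult_pos_pos[OF \<open>t > 0\<close> \<open>K > 0\<close>] by (auto simp: w_def \<sigma>_def abs_if)
  moreover have "B * t < K * t"
    using \<open>t > 0\<close> by (intro mult_strict_right_mono) (simp_all add: K_def)
  ultimately have "B < \<bar>Im w\<bar> / t"
    by (subst pos_less_divide_eq[OF \<open>t > 0\<close>]) linarith
  then show ?thesis
    using z' \<open>Re w = t\<close> \<open>t > 0\<close> by (intro bexI[of _ z']) auto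
qed

lemma Re_nonzero_if_Im_Re_ratio_bounded:
  fixes F :: "complex \<Rightarrow> complex"
  assumes "F holomorphic_on S" "open S" "connected S" "\<not> F constant_on S" "open U" "U \<subseteq> S"
    and bound: "\<And>z. z \<in> U \<Longrightarrow> Re (F z) \<noteq> 0 \<Longrightarrow> \<bar>Im (F z) / Re (F z)\<bar> \<le> B"
    and "z \<in> U"
  shows "Re (F z) \<noteq> 0"
proof
  assume "Re (F z) = 0"
  obtain r where "r > 0" "ball z r \<subseteq> U"
    using \<open>z \<in> U\<close> \<open>open U\<close> openE by blast
  moreover have "ball z r \<subseteq> S"
    using \<open>ball z r \<subseteq> U\<close> \<open>U \<subseteq> S\<close> by (rule order_trans)
  ultimately obtain z' where "z' \<in> ball z r" "Re (F z') \<noteq> 0" "B < \<bar>Im (F z') / Re (F z')\<bar>"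
    using Re_zero_imp_Im_Re_ratio_unbounded[OF assms(1-4) _ _ \<open>Re (F z) = 0\<close>] by blast
  with bound[of z'] \<open>ball z r \<subseteq> U\<close> show False by auto
qed

lemma bounded_near_of_bounded_on_sequences:
  fixes g :: "'a::metric_space \<Rightarrow> real"
  assumes "\<And>p. (\<forall>j. p j \<in> S) \<Longrightarrow> p \<longlonglongrightarrow> a \<Longrightarrow> \<exists>B. \<forall>j. \<bar>g (p j)\<bar> \<le> B"
  shows "\<exists>\<delta>>0. \<exists>B. \<forall>z\<in>S. dist z a < \<delta> \<longrightarrow> \<bar>g z\<bar> \<le> B"
proof (rule ccontr)
  assume "\<not> ?thesis"
  then have "\<forall>\<delta>>0. \<forall>B. \<exists>z\<in>S. dist z a < \<delta> \<and> B < \<bar>g z\<bar>"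
    by (auto simp: not_le)
  then have "\<forall>n::nat. \<exists>z. z \<in> S \<and> dist z a < 1 / Suc n \<and> real n < \<bar>g z\<bar>"
    by (metis of_nat_0_less_iff zero_less_Suc zero_less_divide_1_iff)
  from choice[OF this] obtain p
    where p: "\<forall>n. p n \<in> S \<and> dist (p n) a < 1 / Suc n \<and> real n < \<bar>g (p n)\<bar>"
    by blast
  have "(\<lambda>n. dist (p n) a) \<longlonglongrightarrow> 0"
    by (rule LIMSEQ_norm_0) (use p in simp)
  then have "p \<longlonglongrightarrow> a"
    using tendsto_dist_iff by blast
  then obtain B where "\<And>j. \<bar>g (p j)\<bar> \<le> B" using assms p by blast
  moreover obtain j :: nat where "B < j" using reals_Archimedean2 by blast
  ultimately show False using p by (meson not_le order_less_trans)
qed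

lemma not_constant_on_if_tendsto_0:
  fixes F :: "'a::topological_space \<Rightarrow> 'b::{t2_space,zero}"
  assumes "(F \<longlongrightarrow> 0) (at a within S)" "a islimpt S" "z \<in> S" "F z \<noteq> 0"
  shows "\<not> F constant_on S"
proof
  assume "F constant_on S"
  then have "\<forall>x\<in>S. F x = F z" using \<open>z \<in> S\<close> by (auto simp: constant_on_def)
  then have "(F \<longlongrightarrow> F z) (at a within S)"
    by (auto intro: tendsto_eventually simp: eventually_at_filter)
  have "\<not> trivial_limit (at a within S)"
    using assms(2) trivial_limit_within by blast
  from tendsto_unique[OF this assms(1)] show False
    using \<open>(F \<longlongrightarrow> F z) (at a within S)\<close> assms(4) by simp
qed

lemma upper_half_disc_eq: "upper_half_disc = ball 0 1 \<inter> {z. Im z > 0}"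
  by (auto simp: upper_half_disc_def)

lemma open_upper_half_disc: "open upper_half_disc"
  unfolding upper_half_disc_eq by (intro open_Int open_ball open_halfspace_Im_gt)

lemma connected_upper_half_disc: "connected upper_half_disc"
  unfolding upper_half_disc_eq
  by (intro convex_connected convex_Int convex_ball convex_halfspace_Im_gt)

lemma not_constant_on_upper_half_disc_if_flat:
  assumes "eventually (\<lambda>z. norm (F z) \<le> M * norm z) (at 0 within upper_half_disc)"
    and "z \<in> upper_half_disc" "F z \<noteq> 0"
  shows "\<not> F constant_on upper_half_disc"
proof (rule not_constant_on_if_tendsto_0)
  show "(F \<longlongrightarrow> 0) (at 0 within upper_half_disc)"
    using assms(1) by (rule Lim_null_comparison) (auto intro!: tendsto_eq_intros)
  show "0 islimpt upper_half_disc"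
    using zero_islimpt_upper_half_ball[of 1] by (simp add: upper_half_disc_eq)
qed (use assms in auto)

lemma flat_nonconstant_Im_Re_ratio_unbounded:
  fixes F :: "complex \<Rightarrow> complex"
  assumes holo: "F holomorphic_on upper_half_disc"
    and nonconst: "\<not> F constant_on upper_half_disc"
    and flat: "eventually (\<lambda>z. norm (F z) \<le> M * norm z ^ 2) (at 0 within upper_half_disc)"
    and "\<delta> > 0"
  shows "\<not> (\<forall>z\<in>upper_half_disc. norm z < \<delta> \<longrightarrow> Re (F z) \<noteq> 0 \<longrightarrow> \<bar>Im (F z) / Re (F z)\<bar> \<le> B)"
proof
  assume bound: "\<forall>z\<in>upper_half_disc. norm z < \<delta> \<longrightarrow> Re (F z) \<noteq> 0 \<longrightarrow> \<bar>Im (F z) / Re (F z)\<bar> \<le> B"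
  define U where "U = ball 0 (min \<delta> 1) \<inter> {z. Im z > 0}"
  have "U \<subseteq> upper_half_disc" by (auto simp: U_def upper_half_disc_eq)
  have "open U" unfolding U_def by (intro open_Int open_ball open_halfspace_Im_gt)
  have "\<bar>Im (F z) / Re (F z)\<bar> \<le> B" if "z \<in> U" "Re (F z) \<noteq> 0" for z
    using bound that \<open>U \<subseteq> upper_half_disc\<close> by (auto simp: U_def)
  then have "Re (F z) \<noteq> 0" if "z \<in> U" for z
    using Re_nonzero_if_Im_Re_ratio_bounded[OF holo open_upper_half_disc connected_upper_half_disc
        nonconst \<open>open U\<close> \<open>U \<subseteq> upper_half_disc\<close>] that by blast
  moreover have "eventually (\<lambda>z. norm (F z) \<le> M * norm z ^ 2) (at 0 within U)"
    using flat by (rule filter_leD[OF at_le[OF \<open>U \<subseteq> upper_half_disc\<close>]])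
  moreover have "F holomorphic_on U"
    using holo \<open>U \<subseteq> upper_half_disc\<close> by (rule holomorphic_on_subset)
  moreover have "min \<delta> 1 > 0" using \<open>\<delta> > 0\<close> by simp
  ultimately show False
    using nonvanishing_real_part_not_flat[of F "min \<delta> 1" M] unfolding U_def by blast
qed

theorem mainTheorem1:
  fixes F :: "complex \<Rightarrow> complex" and C :: real
  assumes holo: "F holomorphic_on upper_half_disc"
    and cont: "continuous_on (upper_half_disc \<union> gamma_interval) F"
    and Cpos: "C > 0"
    and cone: "\<forall>z\<in>gamma_interval. \<bar>Im (F z)\<bar> \<le> C * \<bar>Re (F z)\<bar>"
    and flat: "\<forall>k::nat. \<exists>M. eventually (\<lambda>z. norm (F z) \<le> M * norm z ^ k) (at 0 within upper_half_disc)"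
  shows "(\<forall>z\<in>upper_half_disc. F z = 0) \<or>
         (\<exists>p :: nat \<Rightarrow> complex. (\<forall>j. p j \<in> upper_half_disc \<and> Re (F (p j)) \<noteq> 0) \<and>
            p \<longlonglongrightarrow> 0 \<and>
            \<not> (\<exists>B. \<forall>j. \<bar>Im (F (p j)) / Re (F (p j))\<bar> \<le> B))"
proof (rule disjCI)
  assume "\<not> (\<exists>p. (\<forall>j. p j \<in> upper_half_disc \<and> Re (F (p j)) \<noteq> 0) \<and> p \<longlonglongrightarrow> 0 \<and>
            \<not> (\<exists>B. \<forall>j. \<bar>Im (F (p j)) / Re (F (p j))\<bar> \<le> B))"
  then have "\<exists>\<delta>>0. \<exists>B. \<forall>z\<in>{z \<in> upper_half_disc. Re (F z) \<noteq> 0}.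
      dist z 0 < \<delta> \<longrightarrow> \<bar>Im (F z) / Re (F z)\<bar> \<le> B"
    by (intro bounded_near_of_bounded_on_sequences) blast
  then obtain \<delta> B where "\<delta> > 0" and bound:
      "\<forall>z\<in>upper_half_disc. norm z < \<delta> \<longrightarrow> Re (F z) \<noteq> 0 \<longrightarrow> \<bar>Im (F z) / Re (F z)\<bar> \<le> B"
    by (auto simp: dist_norm)
  show "\<forall>z\<in>upper_half_disc. F z = 0"
  proof (rule ccontr)
    assume "\<not> (\<forall>z\<in>upper_half_disc. F z = 0)"
    then obtain z where "z \<in> upper_half_disc" "F z \<noteq> 0" by blast
    obtain M1 where "eventually (\<lambda>z. norm (F z) \<le> M1 * norm z ^ 1) (at 0 within upper_half_disc)"
      using flat by blast
    then have "\<not> F constant_on upper_half_disc"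
      using not_constant_on_upper_half_disc_if_flat \<open>z \<in> upper_half_disc\<close> \<open>F z \<noteq> 0\<close> by auto
    moreover obtain M2 where "eventually (\<lambda>z. norm (F z) \<le> M2 * norm z ^ 2) (at 0 within upper_half_disc)"
      using flat by blast
    ultimately show False
      using flat_nonconstant_Im_Re_ratio_unbounded[OF holo] \<open>\<delta> > 0\<close> bound by blast
  qed
qed

end
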